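(* Let $H$, $G$ be real Hilbert spaces, $Z$ a nonempty closed convex subset of $H\times G$, $x_0\in H\times G$, $\{\lambda_n\}\subset(0,1]$, $\{H_n\}$ closed convex sets with $Z\subset H_n$, and let $\{x_n\}$ be generated by $x_{n+1/2}=x_n+\lambda_n(P_{H_n}(x_n)-x_n)$, $x_{n+1}=P_{H(x_0,x_n)\cap C_n}(x_0)$, where each $C_n$ is closed convex with $Z\subset C_n\subset H(x_n,x_{n+1/2})$. Let $\bar x=P_Z(x_0)$, $w=\tfrac12(x_0+\bar x)$, $r=\|w-x_0\|$ and $b_n:=4r^2-\|x_n-x_0\|^2$. Then: (i) $\|w-x_n\|\le\tfrac12\|x_0-\bar x\|$ for all $n$; (ii) $b_n\ge0$ and $\|x_n-\bar x\|^2\le b_n$ for all $n$; (iii) if $x_n\in H(x_0,x_{n-1})$ for all $n\ge1$, then $\{b_n\}$ is nonincreasing; moreover, if for some $n\ge1$ we have $x_{n-1}\neq x_n$, then $\|\bar x-x_n\|^2<\|x_0-\bar x\|^2-\|x_0-x_{n-1}\|^2$ and $b_n<b_{n-1}$.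
   Context: For $x,y\in H\times G$, $H(x,y):=\{h:\ \langle h-y\mid x-y\rangle\le 0\}$. $P_D$ is the metric projection onto a nonempty closed convex set $D$. *)

theory Defs
  imports "HOL-Analysis.Analysis"
begin

definition halfsp :: "'a::real_inner \<Rightarrow> 'a \<Rightarrow> 'a set" where
  "halfsp x y = {h. inner (h - y) (x - y) \<le> 0}"

text \<open>Same definition as the library's closest_point,
  which however is restricted to heine_borel (finite-dimensional) spaces.\<close>
definition proj :: "'a::real_inner set \<Rightarrow> 'a \<Rightarrow> 'a" where
  "proj D x = (SOME p. p \<in> D \<and> (\<forall>y\<in>D. dist x p \<le> dist x y))"

end

theory Submission
  imports Defs
begin

text \<open>Each \<open>x (n + 1)\<close> is the projection of \<open>x0\<close> onto a closed convex set containing \<open>Z\<close>, so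
  \<open>Z \<subseteq> H(x0, x n)\<close> for all \<open>n\<close> (trivially for \<open>n = 0\<close>); in particular \<open>xbar \<in> H(x0, x n)\<close>, i.e. the angle at \<open>x n\<close> in the triangle
  \<open>x0, x n, xbar\<close> is not acute. Thales' theorem then puts \<open>x n\<close> in the ball with diameter
  \<open>[x0, xbar]\<close>, which gives (i), and the corresponding Pythagorean inequality gives (ii). For (iii),
  \<open>x n \<in> H(x0, x (n - 1))\<close> gives in the same way
  \<open>\<parallel>x (n-1) - x0\<parallel>\<^sup>2 + \<parallel>x n - x (n-1)\<parallel>\<^sup>2 \<le> \<parallel>x n - x0\<parallel>\<^sup>2\<close>, so the distances to \<open>x0\<close> grow, strictly
  whenever the iterate moves. Of the relaxation step \<open>xh n\<close> and the sets \<open>Hn n\<close> nothing is needed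
  beyond \<open>Z \<subseteq> Cn n\<close>.

  The metric projection onto a nonempty closed convex subset of a Hilbert space exists by the
  parallelogram law: a minimising sequence for the squared distance is Cauchy.\<close>

lemma parallelogram_midpoint:
  fixes x a b :: "'a::real_inner"
  shows "(norm (a - b))\<^sup>2
    = 2 * (norm (x - a))\<^sup>2 + 2 * (norm (x - b))\<^sup>2 - 4 * (norm (x - (1/2) *\<^sub>R (a + b)))\<^sup>2"
  by (simp add: power2_norm_eq_inner inner_commute algebra_simps)

lemma exists_sq_dist_lt_infdist:
  assumes "A \<noteq> {}" "e > 0"
  shows "\<exists>a\<in>A. (dist x a)\<^sup>2 < (infdist x A)\<^sup>2 + e"
proof -
  define t where "t = sqrt ((infdist x A)\<^sup>2 + e)"
  have "infdist x A < t"
    unfolding t_def using \<open>e > 0\<close> infdist_nonneg[of x A] by (simp add: real_less_rsqrt)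
  moreover have "bdd_below ((\<lambda>a. dist x a) ` A)" by (rule bdd_belowI[of _ 0]) auto
  ultimately obtain a where "a \<in> A" "dist x a < t"
    using \<open>A \<noteq> {}\<close> by (auto simp: infdist_notempty cINF_less_iff)
  then have "(dist x a)\<^sup>2 < t\<^sup>2" by (intro power_strict_mono) auto
  also have "t\<^sup>2 = (infdist x A)\<^sup>2 + e" unfolding t_def using \<open>e > 0\<close> by simp
  finally show ?thesis using \<open>a \<in> A\<close> by blast
qed

lemma exists_nearest_point_convex:
  fixes D :: "'a::{real_inner,complete_space} set"
  assumes "D \<noteq> {}" "closed D" "convex D"
  shows "\<exists>p\<in>D. \<forall>y\<in>D. dist x p \<le> dist x y"
proof -
  define d where "d = infdist x D"
  have d_le: "d \<le> dist x y" if "y \<in> D" for y unfolding d_def using that by (rule infdist_le)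
  have "\<forall>k::nat. \<exists>y\<in>D. (dist x y)\<^sup>2 < d\<^sup>2 + 1 / Suc k"
    unfolding d_def by (intro allI exists_sq_dist_lt_infdist[OF \<open>D \<noteq> {}\<close>]) simp
  then obtain Y where Y_in: "\<And>k. Y k \<in> D" and Y_dist: "\<And>k. (dist x (Y k))\<^sup>2 < d\<^sup>2 + 1 / Suc k"
    by metis
  have Y_close: "(norm (Y m - Y n))\<^sup>2 \<le> 2 / Suc m + 2 / Suc n" for m n
  proof -
    have "(1/2) *\<^sub>R (Y m + Y n) \<in> D"
      using convexD[OF \<open>convex D\<close> Y_in Y_in, of "1/2" "1/2"] by (simp add: scaleR_add_right)
    then have "d\<^sup>2 \<le> (norm (x - (1/2) *\<^sub>R (Y m + Y n)))\<^sup>2"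
      using d_le infdist_nonneg[of x D] unfolding d_def by (simp add: dist_norm power_mono)
    then show ?thesis
      using parallelogram_midpoint[of "Y m" "Y n" x] Y_dist[of m] Y_dist[of n] by (simp add: dist_norm)
  qed
  have "Cauchy Y"
  proof (rule CauchyI)
    fix e :: real assume "e > 0"
    obtain M :: nat where M: "4 / e\<^sup>2 < M" using reals_Archimedean2 by blast
    have "norm (Y m - Y n) < e" if "m \<ge> M" "n \<ge> M" for m n
    proof -
      have "2 / Suc m \<le> 2 / Suc M" "2 / Suc n \<le> 2 / Suc M"
        using that by (simp_all add: frac_le)
      then have "2 / Suc m + 2 / Suc n \<le> 4 / Suc M" by simp
      also have "\<dots> < e\<^sup>2"
        using M \<open>e > 0\<close> by (simp add: field_simps) (smt (verit) zero_less_power2)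
      finally have "(norm (Y m - Y n))\<^sup>2 < e\<^sup>2" using Y_close[of m n] by linarith
      then show ?thesis using \<open>e > 0\<close> by (simp add: power_less_imp_less_base)
    qed
    then show "\<exists>M. \<forall>m\<ge>M. \<forall>n\<ge>M. norm (Y m - Y n) < e" by blast
  qed
  then obtain p where lim: "Y \<longlonglongrightarrow> p" using Cauchy_convergent_iff convergent_def by blast
  have "p \<in> D" using closed_sequentially[OF \<open>closed D\<close>] Y_in lim by blast
  have "(\<lambda>k. (dist x (Y k))\<^sup>2) \<longlonglongrightarrow> (dist x p)\<^sup>2" by (intro tendsto_intros lim)
  moreover have "(\<lambda>k. d\<^sup>2 + 1 / Suc k) \<longlonglongrightarrow> d\<^sup>2"
    using LIMSEQ_inverse_real_of_nat_add[of "d\<^sup>2"] by (simp add: inverse_eq_divide)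
  ultimately have "(dist x p)\<^sup>2 \<le> d\<^sup>2"
    using Y_dist by (intro LIMSEQ_le) (auto intro: less_imp_le)
  then have "dist x p \<le> d" using infdist_nonneg[of x D] unfolding d_def by (rule power2_le_imp_le)
  then show ?thesis using \<open>p \<in> D\<close> d_le by (meson order_trans)
qed

lemma
  fixes D :: "'a::{real_inner,complete_space} set"
  assumes "D \<noteq> {}" "closed D" "convex D"
  shows proj_in: "proj D x \<in> D"
    and inner_proj_le: "z \<in> D \<Longrightarrow> inner (z - proj D x) (x - proj D x) \<le> 0"
proof -
  have nearest: "proj D x \<in> D \<and> (\<forall>y\<in>D. dist x (proj D x) \<le> dist x y)"
    unfolding proj_def using exists_nearest_point_convex[OF assms] by (rule someI2_bex) blast
  then show "proj D x \<in> D" by blast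
  show "inner (z - proj D x) (x - proj D x) \<le> 0" if "z \<in> D"
    using any_closest_point_dot[OF assms(3,2), of "proj D x" z x] nearest that
    by (simp add: inner_commute)
qed

lemma subset_halfsp_proj:
  fixes D :: "'a::{real_inner,complete_space} set"
  assumes "D \<noteq> {}" "closed D" "convex D"
  shows "D \<subseteq> halfsp x (proj D x)"
  using inner_proj_le[OF assms] by (auto simp: halfsp_def)

lemma halfsp_eq: "halfsp x y = {h. inner (x - y) h \<le> inner (x - y) y}"
  by (auto simp: halfsp_def inner_diff_left inner_commute)

lemma closed_halfsp: "closed (halfsp x y)"
  unfolding halfsp_eq by (rule closed_halfspace_le)

lemma convex_halfsp: "convex (halfsp x y)"
  unfolding halfsp_eq by (rule convex_halfspace_le)

lemma halfsp_pythagoras: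
  fixes a x y :: "'a::real_inner"
  assumes "a \<in> halfsp x y"
  shows "(norm (a - y))\<^sup>2 + (norm (y - x))\<^sup>2 \<le> (norm (a - x))\<^sup>2"
proof -
  have "(norm (a - x))\<^sup>2 = (norm (a - y))\<^sup>2 + (norm (x - y))\<^sup>2 - 2 * inner (a - y) (x - y)"
    by (simp add: power2_norm_eq_inner inner_commute algebra_simps)
  then show ?thesis using assms by (simp add: halfsp_def norm_minus_commute)
qed

lemma norm_sq_less_of_halfsp:
  fixes a x y :: "'a::real_inner"
  assumes "a \<in> halfsp x y" "a \<noteq> y"
  shows "(norm (y - x))\<^sup>2 < (norm (a - x))\<^sup>2"
proof -
  have "(norm (a - y))\<^sup>2 > 0" using assms(2) by simp
  then show ?thesis using halfsp_pythagoras[OF assms(1)] by linarith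
qed

lemma halfsp_in_diameter_ball:
  fixes a x y :: "'a::real_inner"
  assumes "a \<in> halfsp x y"
  shows "norm ((1/2) *\<^sub>R (x + a) - y) \<le> (1/2) * norm (x - a)"
proof -
  have "(2 * norm ((1/2) *\<^sub>R (x + a) - y))\<^sup>2 = 4 * (norm (y - (1/2) *\<^sub>R (x + a)))\<^sup>2"
    by (simp add: power_mult_distrib norm_minus_commute)
  also have "\<dots> \<le> (norm (x - a))\<^sup>2"
    using parallelogram_midpoint[of x a y] halfsp_pythagoras[OF assms]
    by (simp add: norm_minus_commute[of y a] norm_minus_commute[of x a])
  finally have "2 * norm ((1/2) *\<^sub>R (x + a) - y) \<le> norm (x - a)"
    by (rule power2_le_imp_le) simp
  then show ?thesis by simp
qed

lemma subset_halfsp_iterates: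
  fixes Z :: "'a::{real_inner,complete_space} set"
  assumes "Z \<noteq> {}" and x_0: "x 0 = x0"
    and C: "\<And>n. closed (C n) \<and> convex (C n) \<and> Z \<subseteq> C n"
    and x_Suc: "\<And>n. x (Suc n) = proj (halfsp x0 (x n) \<inter> C n) x0"
  shows "Z \<subseteq> halfsp x0 (x n)"
proof (induction n)
  case 0
  then show ?case by (auto simp: halfsp_def x_0)
next
  case (Suc n)
  then have "Z \<subseteq> halfsp x0 (x n) \<inter> C n" using C by blast
  moreover have "closed (halfsp x0 (x n) \<inter> C n)"
    using C by (intro closed_Int closed_halfsp) blast
  moreover have "convex (halfsp x0 (x n) \<inter> C n)"
    using C by (intro convex_Int convex_halfsp) blast
  ultimately show ?case
    using subset_halfsp_proj[of "halfsp x0 (x n) \<inter> C n" x0] \<open>Z \<noteq> {}\<close> by (auto simp: x_Suc)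
qed

theorem proposition12:
  fixes Z :: "('h::{real_inner,complete_space} \<times> 'g::{real_inner,complete_space}) set"
    and x0 :: "'h \<times> 'g"
    and x xh :: "nat \<Rightarrow> 'h \<times> 'g"
    and lam :: "nat \<Rightarrow> real"
    and Hn Cn :: "nat \<Rightarrow> ('h \<times> 'g) set"
    and xbar w :: "'h \<times> 'g"
    and r :: real and b :: "nat \<Rightarrow> real"
  assumes Z: "Z \<noteq> {}" "closed Z" "convex Z"
    and lam: "\<And>n. 0 < lam n \<and> lam n \<le> 1"
    and Hn: "\<And>n. closed (Hn n) \<and> convex (Hn n) \<and> Z \<subseteq> Hn n"
    and Cn: "\<And>n. closed (Cn n) \<and> convex (Cn n) \<and> Z \<subseteq> Cn n \<and> Cn n \<subseteq> halfsp (x n) (xh n)"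
    and x_0: "x 0 = x0"
    and xh_def: "\<And>n. xh n = x n + lam n *\<^sub>R (proj (Hn n) (x n) - x n)"
    and x_Suc: "\<And>n. x (Suc n) = proj (halfsp x0 (x n) \<inter> Cn n) x0"
  defines "xbar \<equiv> proj Z x0"
    and "w \<equiv> (1/2) *\<^sub>R (x0 + xbar)"
    and "r \<equiv> norm (w - x0)"
    and "b \<equiv> (\<lambda>n. 4 * r\<^sup>2 - (norm (x n - x0))\<^sup>2)"
  shows "(\<forall>n. norm (w - x n) \<le> (1/2) * norm (x0 - xbar))
    \<and> (\<forall>n. b n \<ge> 0 \<and> (norm (x n - xbar))\<^sup>2 \<le> b n)
    \<and> ((\<forall>n\<ge>1. x n \<in> halfsp x0 (x (n - 1))) \<longrightarrow>
         ((\<forall>n. b (Suc n) \<le> b n) \<and>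
          (\<forall>n\<ge>1. x (n - 1) \<noteq> x n \<longrightarrow>
              (norm (xbar - x n))\<^sup>2 < (norm (x0 - xbar))\<^sup>2 - (norm (x0 - x (n - 1)))\<^sup>2
              \<and> b n < b (n - 1))))"
proof -
  have "\<And>n. closed (Cn n) \<and> convex (Cn n) \<and> Z \<subseteq> Cn n" using Cn by blast
  from subset_halfsp_iterates[where C = Cn, OF Z(1) x_0 this x_Suc]
  have xbar_halfsp: "xbar \<in> halfsp x0 (x n)" for n
    using proj_in[OF Z, of x0] unfolding xbar_def by blast
  have "w - x0 = (1/2) *\<^sub>R (xbar - x0)"
    unfolding w_def by (simp add: algebra_simps flip: scaleR_add_left)
  then have "4 * r\<^sup>2 = (norm (x0 - xbar))\<^sup>2"
    unfolding r_def by (simp add: power2_eq_square norm_minus_commute)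
  then have b_eq: "b n = (norm (x0 - xbar))\<^sup>2 - (norm (x n - x0))\<^sup>2" for n
    unfolding b_def by simp
  have thales: "(norm (x n - xbar))\<^sup>2 \<le> b n" for n
    using halfsp_pythagoras[OF xbar_halfsp[of n]] unfolding b_eq by (simp add: norm_minus_commute)
  moreover have "b n \<ge> 0" for n by (rule order_trans[OF zero_le_power2 thales])
  moreover have "norm (w - x n) \<le> (1/2) * norm (x0 - xbar)" for n
    using halfsp_in_diameter_ball[OF xbar_halfsp] unfolding w_def .
  moreover have "(\<forall>n. b (Suc n) \<le> b n) \<and>
      (\<forall>n\<ge>1. x (n - 1) \<noteq> x n \<longrightarrow>
         (norm (xbar - x n))\<^sup>2 < (norm (x0 - xbar))\<^sup>2 - (norm (x0 - x (n - 1)))\<^sup>2 \<and> b n < b (n - 1))"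
    if "\<forall>n\<ge>1. x n \<in> halfsp x0 (x (n - 1))"
  proof -
    have step: "x (Suc m) \<in> halfsp x0 (x m)" for m using that[rule_format, of "Suc m"] by simp
    show ?thesis
    proof (intro conjI allI impI)
      fix n show "b (Suc n) \<le> b n"
        using halfsp_pythagoras[OF step[of n]] zero_le_power2[of "norm (x (Suc n) - x n)"]
        unfolding b_eq by linarith
    next
      fix n :: nat assume "n \<ge> 1" "x (n - 1) \<noteq> x n"
      then obtain m where n: "n = Suc m" and "x (Suc m) \<noteq> x m" by (cases n) auto
      then show "b n < b (n - 1)" using norm_sq_less_of_halfsp[OF step[of m]] unfolding b_eq n by simp
      then show "(norm (xbar - x n))\<^sup>2 < (norm (x0 - xbar))\<^sup>2 - (norm (x0 - x (n - 1)))\<^sup>2"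
        using thales[of n] b_eq[of "n - 1"] by (simp add: norm_minus_commute)
    qed
  qed
  ultimately show ?thesis by blast
qed

end
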